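(* Let $n\ge3$, $c\ge1$, $r_2\in\mathbb{C}^*$, and consider the representations $\omega'_j$ ($j=1,2,3$) of $UW_n(c)$ into $\mathrm{GL}_n(\mathbb{C})$ given, for $1\le i\le n-1$ and $1\le t\le c$, by $\omega'_j(\rho_i)=\mathrm{diag}\Big(I_{i-1},\begin{pmatrix}0&1\\1&0\end{pmatrix},I_{n-i-1}\Big)$ and $\omega'_1(\sigma_{i,t})=\mathrm{diag}\Big(I_{i-1},\begin{pmatrix}0&\frac{s_{2,t}}{r_2}\\ r_2s_{3,t}&0\end{pmatrix},I_{n-i-1}\Big)$, $\omega'_2(\sigma_{i,t})=\mathrm{diag}\Big(I_{i-1},\begin{pmatrix}0&\frac{s_{2,t}}{r_2}\\ 1&s_{4,t}\end{pmatrix},I_{n-i-1}\Big)$, $\omega'_3(\sigma_{i,t})=\mathrm{diag}\Big(I_{i-1},\begin{pmatrix}s_{1,t}&\frac{s_{2,t}}{r_2}\\ 1&0\end{pmatrix},I_{n-i-1}\Big)$, with all $s_{k,t}\in\mathbb{C}^*$. Then: (1) $\omega'_1$ is reducible if and only if $s_{2,t}=r_2$ and $s_{3,t}=\frac1{r_2}$ for all $1\le t\le c$; (2) $\omega'_2$ is reducible if and only if $\frac{s_{2,t}}{r_2}+s_{4,t}=1$ for all $1\le t\le c$; (3) $\omega'_3$ is reducible if and only if $s_{1,t}+\frac{s_{2,t}}{r_2}=1$ for all $1\le t\le c$.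
   Context: $UW_n(c)$ is the group with generators $\rho_i$ ($1\le i\le n-1$), $\sigma_{i,t}$ ($1\le i\le n-1$, $1\le t\le c$) and relations $\rho_i\rho_{i+1}\rho_i=\rho_{i+1}\rho_i\rho_{i+1}$, $\rho_i\rho_j=\rho_j\rho_i$ ($|i-j|\ge2$), $\rho_i^2=1$, $\sigma_{i,t}\sigma_{j,\ell}=\sigma_{j,\ell}\sigma_{i,t}$ ($|i-j|\ge2$), $\sigma_{i,t}\rho_j=\rho_j\sigma_{i,t}$ ($|i-j|\ge2$), $\rho_i\rho_{i+1}\sigma_{i,t}=\sigma_{i+1,t}\rho_i\rho_{i+1}$ and $\rho_i\sigma_{i+1,t}\sigma_{i,t}=\sigma_{i+1,t}\sigma_{i,t}\rho_{i+1}$ ($1\le i\le n-2$). $\mathrm{diag}$ denotes a block diagonal matrix, $I_r$ the $r\times r$ identity. Reducible means there is a nonzero proper subspace of $\mathbb{C}^n$ invariant under all image matrices. *)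

theory Defs
  imports "Jordan_Normal_Form.Matrix"
begin

text \<open>The n x n complex matrix diag(I_(i-1), [[a,b],[c,d]], I_(n-i-1)), with the paper's
  1-based index i (1 <= i <= n-1); matrix rows/columns are 0-based, so the 2x2 block
  occupies rows/columns i-1 and i.\<close>
definition blk :: "nat \<Rightarrow> nat \<Rightarrow> complex \<Rightarrow> complex \<Rightarrow> complex \<Rightarrow> complex \<Rightarrow> complex mat" where
  "blk n i a b c d = mat n n (\<lambda>(p, q).
     if p = i - 1 \<and> q = i - 1 then a
     else if p = i - 1 \<and> q = i then b
     else if p = i \<and> q = i - 1 then c
     else if p = i \<and> q = i then d
     else if p = q \<and> p \<noteq> i - 1 \<and> p \<noteq> i then 1 else 0)"

definition rho_mat :: "nat \<Rightarrow> nat \<Rightarrow> complex mat" where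
  "rho_mat n i = blk n i 0 1 1 0"

definition sigma1_mat :: "nat \<Rightarrow> complex \<Rightarrow> (nat \<Rightarrow> complex) \<Rightarrow> (nat \<Rightarrow> complex) \<Rightarrow> nat \<Rightarrow> nat \<Rightarrow> complex mat" where
  "sigma1_mat n r2 s2 s3 i t = blk n i 0 (s2 t / r2) (r2 * s3 t) 0"

definition sigma2_mat :: "nat \<Rightarrow> complex \<Rightarrow> (nat \<Rightarrow> complex) \<Rightarrow> (nat \<Rightarrow> complex) \<Rightarrow> nat \<Rightarrow> nat \<Rightarrow> complex mat" where
  "sigma2_mat n r2 s2 s4 i t = blk n i 0 (s2 t / r2) 1 (s4 t)"

definition sigma3_mat :: "nat \<Rightarrow> complex \<Rightarrow> (nat \<Rightarrow> complex) \<Rightarrow> (nat \<Rightarrow> complex) \<Rightarrow> nat \<Rightarrow> nat \<Rightarrow> complex mat" where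
  "sigma3_mat n r2 s1 s2 i t = blk n i (s1 t) (s2 t / r2) 1 0"

definition gen_images :: "nat \<Rightarrow> nat \<Rightarrow> (nat \<Rightarrow> complex mat) \<Rightarrow> (nat \<Rightarrow> nat \<Rightarrow> complex mat) \<Rightarrow> complex mat set" where
  "gen_images n c R S = R ` {1..n-1} \<union> {S i t | i t. i \<in> {1..n-1} \<and> t \<in> {1..c}}"

definition is_subspace :: "nat \<Rightarrow> complex vec set \<Rightarrow> bool" where
  "is_subspace n W \<longleftrightarrow> W \<subseteq> carrier_vec n \<and> 0\<^sub>v n \<in> W \<and>
     (\<forall>u\<in>W. \<forall>v\<in>W. u + v \<in> W) \<and> (\<forall>a::complex. \<forall>u\<in>W. a \<cdot>\<^sub>v u \<in> W)"

definition reducible :: "nat \<Rightarrow> complex mat set \<Rightarrow> bool" where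
  "reducible n Ms \<longleftrightarrow> (\<exists>W. is_subspace n W \<and> W \<noteq> {0\<^sub>v n} \<and> W \<noteq> carrier_vec n \<and>
     (\<forall>M\<in>Ms. \<forall>v\<in>W. M *\<^sub>v v \<in> W))"

end

theory Submission
  imports Defs
begin

text \<open>The matrices rho_i act on C^n by the adjacent transpositions, so an invariant subspace is
  invariant under all coordinate permutations. The only nonzero proper such subspaces are the line
  spanned by (1,...,1) and the hyperplane of vectors with zero coordinate sum: if some invariant
  vector has two unequal adjacent entries, subtracting its image under the swap isolates
  e_k - e_(k+1), and these differences span the hyperplane. A block matrix
  diag(I, [[a,b],[c,d]], I) (n >= 3, so that an identity row and column remain) fixes the line iff
  its row sums a+b, c+d are 1, and preserves the hyperplane iff its column sums a+c, b+d are 1.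
  Hence the representation is reducible iff all sigma-images satisfy the row condition or all
  satisfy the column condition.\<close>

definition ones_vec :: "nat \<Rightarrow> complex vec" where
  "ones_vec n = vec n (\<lambda>_. 1)"

definition vec_sum :: "complex vec \<Rightarrow> complex" where
  "vec_sum v = (\<Sum>p<dim_vec v. v $ p)"

definition diagonal_line :: "nat \<Rightarrow> complex vec set" where
  "diagonal_line n = range (\<lambda>x. x \<cdot>\<^sub>v ones_vec n)"

definition zero_sum_hyperplane :: "nat \<Rightarrow> complex vec set" where
  "zero_sum_hyperplane n = {v \<in> carrier_vec n. vec_sum v = 0}"

definition mat_invariant :: "complex mat \<Rightarrow> complex vec set \<Rightarrow> bool" where
  "mat_invariant M W \<longleftrightarrow> (\<forall>v\<in>W. M *\<^sub>v v \<in> W)"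

lemma ones_vec_simps [simp]:
  "dim_vec (ones_vec n) = n" "p < n \<Longrightarrow> ones_vec n $ p = 1" "ones_vec n \<in> carrier_vec n"
  by (auto simp: ones_vec_def)

lemma vec_sum_add:
  "u \<in> carrier_vec n \<Longrightarrow> v \<in> carrier_vec n \<Longrightarrow> vec_sum (u + v) = vec_sum u + vec_sum v"
  by (simp add: vec_sum_def sum.distrib)

lemma vec_sum_minus:
  "u \<in> carrier_vec n \<Longrightarrow> v \<in> carrier_vec n \<Longrightarrow> vec_sum (u - v) = vec_sum u - vec_sum v"
  by (simp add: vec_sum_def sum_subtractf)

lemma vec_sum_smult: "vec_sum (a \<cdot>\<^sub>v v) = a * vec_sum v"
  by (simp add: vec_sum_def sum_distrib_left)

lemma vec_sum_unit_vec: "i < n \<Longrightarrow> vec_sum (unit_vec n i) = 1"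
  by (simp add: vec_sum_def)

lemma is_subspace_diff:
  assumes "is_subspace n W" "u \<in> W" "v \<in> W"
  shows "u - v \<in> W"
proof -
  have "u - v = u + (-1) \<cdot>\<^sub>v v"
    using assms by (intro eq_vecI) (auto simp: is_subspace_def)
  then show ?thesis
    using assms by (simp add: is_subspace_def)
qed

lemma is_subspace_diagonal_line: "is_subspace n (diagonal_line n)"
  unfolding is_subspace_def diagonal_line_def
proof (intro conjI ballI allI)
  show "0\<^sub>v n \<in> range (\<lambda>x. x \<cdot>\<^sub>v ones_vec n)"
    by (rule range_eqI[of _ _ 0]) (auto intro!: eq_vecI)
  fix u v assume "u \<in> range (\<lambda>x. x \<cdot>\<^sub>v ones_vec n)" "v \<in> range (\<lambda>x. x \<cdot>\<^sub>v ones_vec n)"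
  then obtain x y where "u = x \<cdot>\<^sub>v ones_vec n" "v = y \<cdot>\<^sub>v ones_vec n" by blast
  then have "u + v = (x + y) \<cdot>\<^sub>v ones_vec n" by (intro eq_vecI) (auto simp: algebra_simps)
  then show "u + v \<in> range (\<lambda>x. x \<cdot>\<^sub>v ones_vec n)" by blast
next
  fix a :: complex and u assume "u \<in> range (\<lambda>x. x \<cdot>\<^sub>v ones_vec n)"
  then obtain x where "u = x \<cdot>\<^sub>v ones_vec n" by blast
  then have "a \<cdot>\<^sub>v u = (a * x) \<cdot>\<^sub>v ones_vec n" by (simp add: smult_smult_assoc)
  then show "a \<cdot>\<^sub>v u \<in> range (\<lambda>x. x \<cdot>\<^sub>v ones_vec n)" by blast
qed auto

lemma is_subspace_zero_sum_hyperplane: "is_subspace n (zero_sum_hyperplane n)"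
  by (auto simp: is_subspace_def zero_sum_hyperplane_def vec_sum_add vec_sum_smult)
     (simp add: vec_sum_def)

lemma diagonal_line_nontrivial:
  assumes "n \<ge> 2"
  shows "diagonal_line n \<noteq> {0\<^sub>v n}" "diagonal_line n \<noteq> carrier_vec n"
proof -
  have "ones_vec n $ 0 \<noteq> 0\<^sub>v n $ 0"
    using assms by simp
  then have "ones_vec n \<noteq> 0\<^sub>v n"
    by metis
  moreover have "ones_vec n \<in> diagonal_line n"
    unfolding diagonal_line_def by (rule range_eqI[of _ _ 1]) simp
  ultimately show "diagonal_line n \<noteq> {0\<^sub>v n}" by blast
  have "unit_vec n 0 \<notin> diagonal_line n"
  proof
    assume "unit_vec n 0 \<in> diagonal_line n"
    then obtain x where "unit_vec n 0 = x \<cdot>\<^sub>v ones_vec n" by (auto simp: diagonal_line_def)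
    then have "unit_vec n 0 $ 0 = (x \<cdot>\<^sub>v ones_vec n) $ 0" "unit_vec n 0 $ 1 = (x \<cdot>\<^sub>v ones_vec n) $ 1"
      by simp_all
    then show False using assms by simp
  qed
  then show "diagonal_line n \<noteq> carrier_vec n" by auto
qed

lemma zero_sum_hyperplane_nontrivial:
  assumes "n \<ge> 2"
  shows "zero_sum_hyperplane n \<noteq> {0\<^sub>v n}" "zero_sum_hyperplane n \<noteq> carrier_vec n"
proof -
  have "(unit_vec n 0 - unit_vec n 1 :: complex vec) $ 0 \<noteq> 0\<^sub>v n $ 0"
    using assms by simp
  then have "unit_vec n 0 - unit_vec n 1 \<noteq> (0\<^sub>v n :: complex vec)"
    by metis
  moreover have "unit_vec n 0 - unit_vec n 1 \<in> zero_sum_hyperplane n"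
    using assms by (auto simp: zero_sum_hyperplane_def vec_sum_minus[of _ n] vec_sum_unit_vec)
  ultimately show "zero_sum_hyperplane n \<noteq> {0\<^sub>v n}" by blast
  have "unit_vec n 0 \<notin> zero_sum_hyperplane n"
    using assms by (simp add: zero_sum_hyperplane_def vec_sum_unit_vec)
  then show "zero_sum_hyperplane n \<noteq> carrier_vec n" by auto
qed

lemma blk_carrier [simp]:
  "dim_row (blk n i a b c d) = n" "dim_col (blk n i a b c d) = n" "blk n i a b c d \<in> carrier_mat n n"
  by (auto simp: blk_def)

lemma blk_mult_vec_carrier [simp]: "v \<in> carrier_vec n \<Longrightarrow> blk n i a b c d *\<^sub>v v \<in> carrier_vec n"
  by (rule mult_mat_vec_carrier[OF blk_carrier(3)])

lemma blk_mult_vec: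
  assumes "v \<in> carrier_vec n" "Suc k < n"
  shows "blk n (Suc k) a b c d *\<^sub>v v = vec n (\<lambda>p.
    if p = k then a * v $ k + b * v $ Suc k
    else if p = Suc k then c * v $ k + d * v $ Suc k else v $ p)" (is "_ = vec n ?f")
proof (rule eq_vecI)
  fix p assume "p < dim_vec (vec n ?f)"
  then have p: "p < n" by simp
  have "(blk n (Suc k) a b c d *\<^sub>v v) $ p = (\<Sum>q<n. blk n (Suc k) a b c d $$ (p, q) * v $ q)"
    using assms p by (simp add: scalar_prod_def lessThan_atLeast0)
  also have "\<dots> = (\<Sum>q<n.
      if p = k then (if q = k then a * v $ q else 0) + (if q = Suc k then b * v $ q else 0)
      else if p = Suc k then (if q = k then c * v $ q else 0) + (if q = Suc k then d * v $ q else 0)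
      else if q = p then v $ q else 0)"
    using assms p by (intro sum.cong) (auto simp: blk_def)
  finally show "(blk n (Suc k) a b c d *\<^sub>v v) $ p = vec n ?f $ p"
    using assms p by (auto simp: sum.distrib)
qed simp

lemma vec_sum_split_pair:
  assumes "v \<in> carrier_vec n" "Suc k < n"
  shows "vec_sum v = v $ k + v $ Suc k + (\<Sum>p \<in> {..<n} - {k, Suc k}. v $ p)"
proof -
  have "vec_sum v = (\<Sum>p \<in> {k, Suc k}. v $ p) + (\<Sum>p \<in> {..<n} - {k, Suc k}. v $ p)"
    using assms unfolding vec_sum_def by (subst sum.subset_diff[of "{k, Suc k}"]) auto
  then show ?thesis
    by simp
qed

lemma vec_sum_blk_mult:
  assumes "v \<in> carrier_vec n" "Suc k < n"
  shows "vec_sum (blk n (Suc k) a b c d *\<^sub>v v) =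
    vec_sum v + (a + c - 1) * v $ k + (b + d - 1) * v $ Suc k"
proof -
  let ?w = "blk n (Suc k) a b c d *\<^sub>v v"
  have w: "?w \<in> carrier_vec n"
    using assms(1) by simp
  have "(\<Sum>p \<in> {..<n} - {k, Suc k}. ?w $ p) = (\<Sum>p \<in> {..<n} - {k, Suc k}. v $ p)"
    using assms by (intro sum.cong) (auto simp: blk_mult_vec)
  then show ?thesis
    using assms vec_sum_split_pair[OF w assms(2)] vec_sum_split_pair[OF assms]
    by (simp add: blk_mult_vec algebra_simps)
qed

lemma index_outside_pair:
  fixes n k :: nat
  assumes "n \<ge> 3" "Suc k < n"
  obtains q where "q < n" "q \<noteq> k" "q \<noteq> Suc k"
  using assms that[of "if k = 0 then 2 else 0"] by auto

lemma blk_invariant_diagonal_line_iff: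
  assumes "n \<ge> 3" "Suc k < n"
  shows "mat_invariant (blk n (Suc k) a b c d) (diagonal_line n) \<longleftrightarrow> a + b = 1 \<and> c + d = 1"
proof -
  define r where "r = vec n (\<lambda>p. if p = k then a + b else if p = Suc k then c + d else 1)"
  have image: "blk n (Suc k) a b c d *\<^sub>v (x \<cdot>\<^sub>v ones_vec n) = x \<cdot>\<^sub>v r" for x
    using assms by (intro eq_vecI) (auto simp: blk_mult_vec r_def algebra_simps)
  obtain q where q: "q < n" "q \<noteq> k" "q \<noteq> Suc k"
    using index_outside_pair[OF assms] .
  show ?thesis
  proof
    assume "mat_invariant (blk n (Suc k) a b c d) (diagonal_line n)"
    then have "blk n (Suc k) a b c d *\<^sub>v (1 \<cdot>\<^sub>v ones_vec n) \<in> diagonal_line n"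
      unfolding mat_invariant_def diagonal_line_def by blast
    then have "1 \<cdot>\<^sub>v r \<in> diagonal_line n"
      by (simp only: image)
    then obtain y where y: "1 \<cdot>\<^sub>v r = y \<cdot>\<^sub>v ones_vec n"
      by (auto simp: diagonal_line_def)
    have "r $ p = y" if "p < n" for p
      using arg_cong[OF y, of "\<lambda>v. v $ p"] that by (simp add: r_def)
    from this[of q] this[of k] this[of "Suc k"] show "a + b = 1 \<and> c + d = 1"
      using assms q by (simp add: r_def)
  next
    assume "a + b = 1 \<and> c + d = 1"
    then have "r = ones_vec n"
      by (intro eq_vecI) (auto simp: r_def)
    then show "mat_invariant (blk n (Suc k) a b c d) (diagonal_line n)"
      using image by (auto simp: mat_invariant_def diagonal_line_def)
  qed
qed

lemma blk_invariant_zero_sum_hyperplane_iff: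
  assumes "n \<ge> 3" "Suc k < n"
  shows "mat_invariant (blk n (Suc k) a b c d) (zero_sum_hyperplane n) \<longleftrightarrow> a + c = 1 \<and> b + d = 1"
proof
  assume inv: "mat_invariant (blk n (Suc k) a b c d) (zero_sum_hyperplane n)"
  obtain q where q: "q < n" "q \<noteq> k" "q \<noteq> Suc k"
    using index_outside_pair[OF assms] .
  have "vec_sum (blk n (Suc k) a b c d *\<^sub>v (unit_vec n j - unit_vec n q)) = 0" if "j < n" for j
  proof -
    have "unit_vec n j - unit_vec n q \<in> zero_sum_hyperplane n"
      using that q by (simp add: zero_sum_hyperplane_def vec_sum_minus[of _ n] vec_sum_unit_vec)
    then show ?thesis
      using inv by (simp add: mat_invariant_def zero_sum_hyperplane_def)
  qed
  from this[of k] this[of "Suc k"] have "a + c - 1 = 0" "b + d - 1 = 0"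
    using assms q by (simp_all add: vec_sum_blk_mult vec_sum_minus[of _ n] vec_sum_unit_vec)
  then show "a + c = 1 \<and> b + d = 1"
    by simp
next
  assume "a + c = 1 \<and> b + d = 1"
  then show "mat_invariant (blk n (Suc k) a b c d) (zero_sum_hyperplane n)"
    using assms by (simp add: mat_invariant_def zero_sum_hyperplane_def vec_sum_blk_mult)
qed

definition adjacent_diff :: "nat \<Rightarrow> nat \<Rightarrow> complex vec" where
  "adjacent_diff n k = unit_vec n k - unit_vec n (Suc k)"

lemma adjacent_diff_carrier [simp]:
  "adjacent_diff n k \<in> carrier_vec n" "dim_vec (adjacent_diff n k) = n"
  by (simp_all add: adjacent_diff_def)

lemma index_adjacent_diff:
  "p < n \<Longrightarrow> Suc k < n \<Longrightarrow> adjacent_diff n k $ p = (if p = k then 1 else if p = Suc k then -1 else 0)"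
  by (simp add: adjacent_diff_def)

lemma vec_sum_adjacent_diff: "Suc k < n \<Longrightarrow> vec_sum (adjacent_diff n k) = 0"
  by (simp add: adjacent_diff_def vec_sum_minus[of _ n] vec_sum_unit_vec)

lemma rho_mat_mult_vec:
  "v \<in> carrier_vec n \<Longrightarrow> Suc k < n \<Longrightarrow> rho_mat n (Suc k) *\<^sub>v v =
    vec n (\<lambda>p. if p = k then v $ Suc k else if p = Suc k then v $ k else v $ p)"
  by (intro eq_vecI) (simp_all add: rho_mat_def blk_mult_vec)

lemma adjacent_diff_mem_if_unequal:
  assumes W: "is_subspace n W" and inv: "mat_invariant (rho_mat n (Suc k)) W"
    and w: "w \<in> W" and k: "Suc k < n" and ne: "w $ k \<noteq> w $ Suc k"
  shows "adjacent_diff n k \<in> W"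
proof -
  have wc: "w \<in> carrier_vec n"
    using W w by (auto simp: is_subspace_def)
  have "w - rho_mat n (Suc k) *\<^sub>v w = (w $ k - w $ Suc k) \<cdot>\<^sub>v adjacent_diff n k"
    using wc k by (intro eq_vecI) (auto simp: rho_mat_mult_vec index_adjacent_diff)
  moreover have "w - rho_mat n (Suc k) *\<^sub>v w \<in> W"
    using is_subspace_diff[OF W w] inv w by (simp add: mat_invariant_def)
  ultimately have "(1 / (w $ k - w $ Suc k)) \<cdot>\<^sub>v ((w $ k - w $ Suc k) \<cdot>\<^sub>v adjacent_diff n k) \<in> W"
    using W by (simp add: is_subspace_def)
  then show ?thesis
    using ne by (simp add: smult_smult_assoc)
qed

lemma adjacent_diff_mem_of_one:
  assumes W: "is_subspace n W" and inv: "\<And>k. Suc k < n \<Longrightarrow> mat_invariant (rho_mat n (Suc k)) W"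
    and k: "Suc k < n" "adjacent_diff n k \<in> W" and j: "Suc j < n"
  shows "adjacent_diff n j \<in> W"
proof -
  \<comment> \<open>e_j - e_(j+1) has unequal entries at j+1, j+2 and e_(j+1) - e_(j+2) has them at j, j+1.\<close>
  have step: "adjacent_diff n (Suc j) \<in> W \<longleftrightarrow> adjacent_diff n j \<in> W" if "Suc (Suc j) < n" for j
  proof
    assume "adjacent_diff n (Suc j) \<in> W"
    then show "adjacent_diff n j \<in> W"
      using that by (intro adjacent_diff_mem_if_unequal[OF W inv]) (auto simp: index_adjacent_diff)
  next
    assume "adjacent_diff n j \<in> W"
    then show "adjacent_diff n (Suc j) \<in> W"
      using that by (intro adjacent_diff_mem_if_unequal[OF W inv]) (auto simp: index_adjacent_diff)
  qed
  have "adjacent_diff n j \<in> W \<longleftrightarrow> adjacent_diff n 0 \<in> W" if "Suc j < n" for j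
    using that
  proof (induction j)
    case (Suc j)
    then show ?case
      using step[of j] by simp
  qed simp
  then show ?thesis
    using k j by blast
qed

lemma zero_sum_hyperplane_subset:
  assumes W: "is_subspace n W" and diffs: "\<And>j. Suc j < n \<Longrightarrow> adjacent_diff n j \<in> W"
  shows "zero_sum_hyperplane n \<subseteq> W"
proof -
  \<comment> \<open>Induction on a bound m for the support; adding v_(m+1) (e_m - e_(m+1)) clears entry m+1.\<close>
  have supported: "v \<in> W"
    if "v \<in> carrier_vec n" "vec_sum v = 0" "\<forall>p. m < p \<longrightarrow> p < n \<longrightarrow> v $ p = 0" for m v
    using that
  proof (induction m arbitrary: v)
    case 0
    have "vec_sum v = (\<Sum>p<n. if p = 0 then v $ 0 else 0)"
      unfolding vec_sum_def using 0 by (intro sum.cong) auto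
    then have "n > 0 \<Longrightarrow> v $ 0 = 0"
      using 0 by simp
    then have "v $ p = 0" if "p < n" for p
      using 0 that by (cases "p = 0") auto
    then have "v = 0\<^sub>v n"
      using 0 by (intro eq_vecI) auto
    then show ?case
      using W by (simp add: is_subspace_def)
  next
    case (Suc m)
    show ?case
    proof (cases "Suc m < n")
      case False
      then show ?thesis
        using Suc by (intro Suc.IH) auto
    next
      case True
      define v' where "v' = v + v $ Suc m \<cdot>\<^sub>v adjacent_diff n m"
      have "v' \<in> W"
      proof (rule Suc.IH)
        show "v' \<in> carrier_vec n"
          using Suc.prems by (simp add: v'_def)
        show "vec_sum v' = 0"
          using Suc.prems True by (simp add: v'_def vec_sum_add[of _ n] vec_sum_smult vec_sum_adjacent_diff)
        show "\<forall>p. m < p \<longrightarrow> p < n \<longrightarrow> v' $ p = 0"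
          using Suc.prems True by (auto simp: v'_def index_adjacent_diff)
      qed
      moreover have "v = v' - v $ Suc m \<cdot>\<^sub>v adjacent_diff n m"
        using Suc.prems by (intro eq_vecI) (auto simp: v'_def)
      moreover have "v $ Suc m \<cdot>\<^sub>v adjacent_diff n m \<in> W"
        using W diffs[OF True] by (simp add: is_subspace_def)
      ultimately show ?thesis
        using is_subspace_diff[OF W] by metis
    qed
  qed
  show ?thesis
    unfolding zero_sum_hyperplane_def using supported[where m = n] by auto
qed

lemma subspace_eq_zero_sum_hyperplane:
  assumes W: "is_subspace n W" and "zero_sum_hyperplane n \<subseteq> W" and "W \<noteq> carrier_vec n"
  shows "W = zero_sum_hyperplane n"
proof (rule ccontr)
  assume "W \<noteq> zero_sum_hyperplane n"
  then obtain w where w: "w \<in> W" "vec_sum w \<noteq> 0"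
    using assms W by (auto simp: zero_sum_hyperplane_def is_subspace_def)
  have wc: "w \<in> carrier_vec n"
    using W w by (auto simp: is_subspace_def)
  have "x \<in> W" if x: "x \<in> carrier_vec n" for x
  proof -
    define a where "a = vec_sum x / vec_sum w"
    have "x - a \<cdot>\<^sub>v w \<in> zero_sum_hyperplane n"
      using x wc w by (simp add: zero_sum_hyperplane_def vec_sum_minus[of _ n] vec_sum_smult a_def)
    then have "(x - a \<cdot>\<^sub>v w) + a \<cdot>\<^sub>v w \<in> W"
      using assms w by (auto simp: is_subspace_def)
    moreover have "(x - a \<cdot>\<^sub>v w) + a \<cdot>\<^sub>v w = x"
      using x wc by (intro eq_vecI) auto
    ultimately show ?thesis
      by simp
  qed
  then show False
    using assms W by (auto simp: is_subspace_def)
qed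

lemma subspace_eq_diagonal_line:
  assumes W: "is_subspace n W" and "W \<noteq> {0\<^sub>v n}" and "W \<subseteq> diagonal_line n"
  shows "W = diagonal_line n"
proof -
  obtain w where w: "w \<in> W" "w \<noteq> 0\<^sub>v n"
    using assms by (auto simp: is_subspace_def)
  then obtain x where x: "w = x \<cdot>\<^sub>v ones_vec n"
    using assms by (auto simp: diagonal_line_def)
  with w have "x \<noteq> 0"
    by auto
  have "y \<cdot>\<^sub>v ones_vec n \<in> W" for y
  proof -
    have "(y / x) \<cdot>\<^sub>v w \<in> W"
      using W w by (simp add: is_subspace_def)
    then show ?thesis
      using \<open>x \<noteq> 0\<close> by (simp add: x smult_smult_assoc)
  qed
  then show ?thesis
    using assms by (auto simp: diagonal_line_def)
qed

lemma rho_invariant_subspace_cases: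
  assumes W: "is_subspace n W" and "W \<noteq> {0\<^sub>v n}" and "W \<noteq> carrier_vec n"
    and inv: "\<And>k. Suc k < n \<Longrightarrow> mat_invariant (rho_mat n (Suc k)) W"
  shows "W = diagonal_line n \<or> W = zero_sum_hyperplane n"
proof (cases "\<forall>w\<in>W. \<forall>k. Suc k < n \<longrightarrow> w $ k = w $ Suc k")
  case True
  have "w = w $ 0 \<cdot>\<^sub>v ones_vec n" if w: "w \<in> W" for w
  proof -
    have entries_eq: "w $ p = w $ 0" if "p < n" for p
      using that
    proof (induction p)
      case (Suc p)
      then show ?case
        using True w by simp
    qed simp
    have "dim_vec w = n"
      using W w by (auto simp: is_subspace_def)
    then show ?thesis
      by (metis entries_eq eq_vecI index_smult_vec ones_vec_simps mult.right_neutral)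
  qed
  then have "W \<subseteq> diagonal_line n"
    unfolding diagonal_line_def by (metis rangeI subsetI)
  then have "W = diagonal_line n"
    by (rule subspace_eq_diagonal_line[OF W \<open>W \<noteq> {0\<^sub>v n}\<close>])
  then show ?thesis ..
next
  case False
  then obtain w k where w: "w \<in> W" and k: "Suc k < n" and ne: "w $ k \<noteq> w $ Suc k"
    by blast
  have "adjacent_diff n k \<in> W"
    using adjacent_diff_mem_if_unequal[OF W inv[OF k] w k ne] .
  then have "adjacent_diff n j \<in> W" if "Suc j < n" for j
    using adjacent_diff_mem_of_one[OF W inv k _ that] by simp
  then have "zero_sum_hyperplane n \<subseteq> W"
    by (rule zero_sum_hyperplane_subset[OF W])
  then have "W = zero_sum_hyperplane n"
    by (rule subspace_eq_zero_sum_hyperplane[OF W _ \<open>W \<noteq> carrier_vec n\<close>])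
  then show ?thesis ..
qed

lemma gen_images_invariant_iff:
  assumes n: "n \<ge> 2"
    and S: "\<And>i t. i \<in> {1..n-1} \<Longrightarrow> t \<in> {1..c} \<Longrightarrow> S i t = blk n i (A t) (B t) (C t) (D t)"
    and blk_invariant: "\<And>k a11 a12 a21 a22. Suc k < n \<Longrightarrow>
      mat_invariant (blk n (Suc k) a11 a12 a21 a22) W \<longleftrightarrow> P a11 a12 a21 a22"
    and P_swap: "P 0 1 1 0"
  shows "(\<forall>M \<in> gen_images n c (rho_mat n) S. mat_invariant M W) \<longleftrightarrow>
    (\<forall>t\<in>{1..c}. P (A t) (B t) (C t) (D t))"
proof
  assume inv: "\<forall>M \<in> gen_images n c (rho_mat n) S. mat_invariant M W"
  show "\<forall>t\<in>{1..c}. P (A t) (B t) (C t) (D t)"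
  proof
    fix t assume t: "t \<in> {1..c}"
    have one: "1 \<in> {1..n-1}"
      using n by simp
    then have "S 1 t \<in> gen_images n c (rho_mat n) S"
      unfolding gen_images_def using t by blast
    then have "mat_invariant (S 1 t) W"
      using inv by blast
    then have "mat_invariant (blk n (Suc 0) (A t) (B t) (C t) (D t)) W"
      using S[OF one t] by simp
    then show "P (A t) (B t) (C t) (D t)"
      using blk_invariant[of 0] n by simp
  qed
next
  assume P: "\<forall>t\<in>{1..c}. P (A t) (B t) (C t) (D t)"
  have Suc_pred: "\<exists>k. i = Suc k \<and> Suc k < n" if "i \<in> {1..n-1}" for i
    using that by (intro exI[of _ "i - 1"]) auto
  show "\<forall>M \<in> gen_images n c (rho_mat n) S. mat_invariant M W"
  proof
    fix M assume "M \<in> gen_images n c (rho_mat n) S"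
    then consider (rho) i where "i \<in> {1..n-1}" "M = rho_mat n i"
      | (sigma) i t where "i \<in> {1..n-1}" "t \<in> {1..c}" "M = S i t"
      unfolding gen_images_def by blast
    then show "mat_invariant M W"
    proof cases
      case (rho i)
      with Suc_pred obtain k where "i = Suc k" "Suc k < n"
        by blast
      then show ?thesis
        using rho blk_invariant P_swap by (simp add: rho_mat_def)
    next
      case (sigma i t)
      with Suc_pred obtain k where "i = Suc k" "Suc k < n"
        by blast
      then show ?thesis
        using sigma S blk_invariant P by simp
    qed
  qed
qed

lemma reducible_blk_iff:
  assumes n: "n \<ge> 3"
    and S: "\<And>i t. i \<in> {1..n-1} \<Longrightarrow> t \<in> {1..c} \<Longrightarrow> S i t = blk n i (A t) (B t) (C t) (D t)"
  shows "reducible n (gen_images n c (rho_mat n) S) \<longleftrightarrow>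
    (\<forall>t\<in>{1..c}. A t + B t = 1 \<and> C t + D t = 1) \<or> (\<forall>t\<in>{1..c}. A t + C t = 1 \<and> B t + D t = 1)"
proof -
  let ?G = "gen_images n c (rho_mat n) S"
  have line: "(\<forall>M\<in>?G. mat_invariant M (diagonal_line n)) \<longleftrightarrow>
      (\<forall>t\<in>{1..c}. A t + B t = 1 \<and> C t + D t = 1)"
    using n by (intro gen_images_invariant_iff[OF _ S]) (simp_all add: blk_invariant_diagonal_line_iff)
  have hyperplane: "(\<forall>M\<in>?G. mat_invariant M (zero_sum_hyperplane n)) \<longleftrightarrow>
      (\<forall>t\<in>{1..c}. A t + C t = 1 \<and> B t + D t = 1)"
    using n by (intro gen_images_invariant_iff[OF _ S]) (simp_all add: blk_invariant_zero_sum_hyperplane_iff)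
  have "reducible n ?G \<longleftrightarrow>
      (\<forall>M\<in>?G. mat_invariant M (diagonal_line n)) \<or> (\<forall>M\<in>?G. mat_invariant M (zero_sum_hyperplane n))"
  proof
    assume "reducible n ?G"
    then obtain W where W: "is_subspace n W" "W \<noteq> {0\<^sub>v n}" "W \<noteq> carrier_vec n"
      and inv: "\<forall>M\<in>?G. mat_invariant M W"
      unfolding reducible_def mat_invariant_def by blast
    have "mat_invariant (rho_mat n (Suc k)) W" if "Suc k < n" for k
    proof -
      have "rho_mat n (Suc k) \<in> ?G"
        unfolding gen_images_def using that by (intro UnI1 imageI) auto
      then show ?thesis
        using inv by blast
    qed
    then have "W = diagonal_line n \<or> W = zero_sum_hyperplane n"
      by (rule rho_invariant_subspace_cases[OF W])
    with inv show "(\<forall>M\<in>?G. mat_invariant M (diagonal_line n)) \<or>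
        (\<forall>M\<in>?G. mat_invariant M (zero_sum_hyperplane n))"
      by blast
  next
    have "n \<ge> 2"
      using n by simp
    assume "(\<forall>M\<in>?G. mat_invariant M (diagonal_line n)) \<or>
        (\<forall>M\<in>?G. mat_invariant M (zero_sum_hyperplane n))"
    then show "reducible n ?G"
    proof
      assume "\<forall>M\<in>?G. mat_invariant M (diagonal_line n)"
      then show "reducible n ?G"
        unfolding reducible_def mat_invariant_def
        using is_subspace_diagonal_line diagonal_line_nontrivial[OF \<open>n \<ge> 2\<close>] by blast
    next
      assume "\<forall>M\<in>?G. mat_invariant M (zero_sum_hyperplane n)"
      then show "reducible n ?G"
        unfolding reducible_def mat_invariant_def
        using is_subspace_zero_sum_hyperplane zero_sum_hyperplane_nontrivial[OF \<open>n \<ge> 2\<close>] by blast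
    qed
  qed
  with line hyperplane show ?thesis
    by simp
qed

theorem proposition6p3:
  fixes n c :: nat and r2 :: complex and s1 s2 s3 s4 :: "nat \<Rightarrow> complex"
  assumes "n \<ge> 3" and "c \<ge> 1" and "r2 \<noteq> 0"
    and "\<forall>t\<in>{1..c}. s1 t \<noteq> 0 \<and> s2 t \<noteq> 0 \<and> s3 t \<noteq> 0 \<and> s4 t \<noteq> 0"
  shows "(reducible n (gen_images n c (rho_mat n) (sigma1_mat n r2 s2 s3)) \<longleftrightarrow>
            (\<forall>t\<in>{1..c}. s2 t = r2 \<and> s3 t = 1 / r2))
       \<and> (reducible n (gen_images n c (rho_mat n) (sigma2_mat n r2 s2 s4)) \<longleftrightarrow>
            (\<forall>t\<in>{1..c}. s2 t / r2 + s4 t = 1))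
       \<and> (reducible n (gen_images n c (rho_mat n) (sigma3_mat n r2 s1 s2)) \<longleftrightarrow>
            (\<forall>t\<in>{1..c}. s1 t + s2 t / r2 = 1))"
proof -
  have sigma1_blk: "sigma1_mat n r2 s2 s3 i t = blk n i 0 (s2 t / r2) (r2 * s3 t) 0"
    and sigma2_blk: "sigma2_mat n r2 s2 s4 i t = blk n i 0 (s2 t / r2) 1 (s4 t)"
    and sigma3_blk: "sigma3_mat n r2 s1 s2 i t = blk n i (s1 t) (s2 t / r2) 1 0" for i t
    by (simp_all add: sigma1_mat_def sigma2_mat_def sigma3_mat_def)
  \<comment> \<open>For sigma1 the row and column conditions coincide; for sigma2 (sigma3) the row (column)
    condition forces s4 = 0 (s1 = 0) and then implies the other one.\<close>
  from reducible_blk_iff[OF \<open>n \<ge> 3\<close> sigma1_blk] reducible_blk_iff[OF \<open>n \<ge> 3\<close> sigma2_blk]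
    reducible_blk_iff[OF \<open>n \<ge> 3\<close> sigma3_blk]
  show ?thesis
    using \<open>r2 \<noteq> 0\<close> by (auto simp: field_simps)
qed

end
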